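(* Let $v_0\in\mathbb{R}^n$ be a unit vector, $\tau>0$, $\epsilon\ge 0$, and let $\mathbf{A}(x)$ be a homogeneous cubic polynomial such that $|\tilde{\mathbb{E}}\,\mathbf{A}(x)|\le \epsilon\tau(\tilde{\mathbb{E}}\|x\|^4)^{3/4}$ for every degree-$4$ pseudo-expectation $\tilde{\mathbb{E}}$. Let $\mathbf{T}(x)=\tau\langle v_0,x\rangle^3+\mathbf{A}(x)$, and let $\tilde{\mathbb{E}}$ be any degree-$4$ pseudo-expectation satisfying $\{\|x\|^2=1\}$ that maximizes $\tilde{\mathbb{E}}\,\mathbf{T}(x)$ among all degree-$4$ pseudo-expectations satisfying $\{\|x\|^2=1\}$. Then $v:=\tilde{\mathbb{E}}x/\|\tilde{\mathbb{E}}x\|$ (where $\tilde{\mathbb{E}}x\in\mathbb{R}^n$ has coordinates $\tilde{\mathbb{E}}x_i$) satisfies $\langle v,v_0\rangle\ge 1-O(\epsilon)$.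
   Context: A degree-$d$ pseudo-expectation ($d$ even) is a linear functional $\tilde{\mathbb{E}}:\mathbb{R}[x]_{\le d}\to\mathbb{R}$ with $\tilde{\mathbb{E}}\,1=1$ and $\tilde{\mathbb{E}}\,p(x)^2\ge 0$ for every polynomial $p$ of degree at most $d/2$. It satisfies $\{p(x)=0\}$ if $\tilde{\mathbb{E}}\,p(x)q(x)=0$ for all $q$ with $\deg(pq)\le d$. *)

theory Defs
  imports Complex_Main "HOL-Library.Multiset"
begin

text \<open>Polynomials in the variables x_0, ..., x_(n-1) with real coefficients are represented
  by their coefficient functions: a polynomial p is a function from monomials
  (multisets of variable indices; the multiset alpha stands for the monomial
  prod_(i in# alpha) x_i) to reals.\<close>

definition monoms :: "nat \<Rightarrow> nat \<Rightarrow> nat multiset set" where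
  "monoms n d = {\<alpha>. set_mset \<alpha> \<subseteq> {..<n} \<and> size \<alpha> \<le> d}"

definition poly_in :: "nat \<Rightarrow> nat \<Rightarrow> (nat multiset \<Rightarrow> real) \<Rightarrow> bool" where
  "poly_in n d p \<longleftrightarrow> (\<forall>\<alpha>. p \<alpha> \<noteq> 0 \<longrightarrow> \<alpha> \<in> monoms n d)"

definition pmul :: "(nat multiset \<Rightarrow> real) \<Rightarrow> (nat multiset \<Rightarrow> real) \<Rightarrow> nat multiset \<Rightarrow> real" where
  "pmul p q \<gamma> = (\<Sum>\<alpha>\<in>{\<alpha>. \<alpha> \<subseteq># \<gamma>}. p \<alpha> * q (\<gamma> - \<alpha>))"

definition pone :: "nat multiset \<Rightarrow> real" where
  "pone \<alpha> = (if \<alpha> = {#} then 1 else 0)"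

definition sqnorm :: "nat \<Rightarrow> nat multiset \<Rightarrow> real" where
  "sqnorm n \<alpha> = (if \<exists>i<n. \<alpha> = {#i, i#} then 1 else 0)"

definition linform :: "nat \<Rightarrow> (nat \<Rightarrow> real) \<Rightarrow> nat multiset \<Rightarrow> real" where
  "linform n v \<alpha> = (if \<exists>i<n. \<alpha> = {#i#} then (\<Sum>i\<in>#\<alpha>. v i) else 0)"

text \<open>A linear functional on polynomials of degree at most d in n variables is determined by
  its values L alpha on the monomials alpha in monoms n d; its value on p is pE n d L p.\<close>
definition pE :: "nat \<Rightarrow> nat \<Rightarrow> (nat multiset \<Rightarrow> real) \<Rightarrow> (nat multiset \<Rightarrow> real) \<Rightarrow> real" where
  "pE n d L p = (\<Sum>\<alpha>\<in>monoms n d. p \<alpha> * L \<alpha>)"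

definition pseudo_exp :: "nat \<Rightarrow> nat \<Rightarrow> (nat multiset \<Rightarrow> real) \<Rightarrow> bool" where
  "pseudo_exp n d L \<longleftrightarrow> pE n d L pone = 1 \<and>
     (\<forall>q. poly_in n (d div 2) q \<longrightarrow> pE n d L (pmul q q) \<ge> 0)"

text \<open>The pseudo-expectation satisfies {p = 0} (p of degree k): E p q = 0 whenever deg(pq) <= d,
  i.e. for all q of degree at most d - k.\<close>
definition satisfies :: "nat \<Rightarrow> nat \<Rightarrow> (nat multiset \<Rightarrow> real) \<Rightarrow> nat \<Rightarrow> (nat multiset \<Rightarrow> real) \<Rightarrow> bool" where
  "satisfies n d L k p \<longleftrightarrow> (\<forall>q. poly_in n (d - k) q \<longrightarrow> pE n d L (pmul p q) = 0)"

definition sphere_poly :: "nat \<Rightarrow> nat multiset \<Rightarrow> real" where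
  "sphere_poly n \<alpha> = sqnorm n \<alpha> - pone \<alpha>"

definition homogeneous_cubic :: "nat \<Rightarrow> (nat multiset \<Rightarrow> real) \<Rightarrow> bool" where
  "homogeneous_cubic n A \<longleftrightarrow> (\<forall>\<alpha>. A \<alpha> \<noteq> 0 \<longrightarrow> set_mset \<alpha> \<subseteq> {..<n} \<and> size \<alpha> = 3)"

end

theory Submission
  imports Defs "HOL-Library.Poly_Mapping" "HOL-Analysis.L2_Norm"
begin

text \<open>Write \<open>t = \<langle>v\<^sub>0, x\<rangle>\<close> and \<open>e\<^sub>k = \<E> t\<^sup>k\<close>. The point mass at \<open>v\<^sub>0\<close> is feasible with
  objective value at least \<open>\<tau>(1 - \<epsilon>)\<close>, while the optimum is at most \<open>\<tau> e\<^sub>3 + \<epsilon>\<tau>\<close>;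
  hence \<open>e\<^sub>3 \<ge> 1 - 2\<epsilon>\<close>. On the sphere the sum-of-squares certificates \<open>(t\<^sup>2 - t)\<^sup>2 \<ge> 0\<close>,
  \<open>(1 + t)\<^sup>2 (\<parallel>x\<parallel>\<^sup>2 - t\<^sup>2) \<ge> 0\<close> and \<open>\<parallel>x\<parallel>\<^sup>2 - t\<^sup>2 \<ge> 0\<close> give
  \<open>e\<^sub>4 - 2e\<^sub>3 + e\<^sub>2 \<ge> 0\<close>, \<open>1 + 2e\<^sub>1 - 2e\<^sub>3 - e\<^sub>4 \<ge> 0\<close> and \<open>e\<^sub>2 \<le> 1\<close>, so
  \<open>e\<^sub>1 \<ge> 2e\<^sub>3 - 1 \<ge> 1 - 4\<epsilon>\<close>. Finally \<open>\<parallel>\<E> x\<parallel> \<le> 1\<close>, so normalising \<open>\<E> x\<close> can only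
  increase a positive correlation with \<open>v\<^sub>0\<close>; for \<open>\<epsilon> \<ge> 1/4\<close> Cauchy-Schwarz suffices.
  Altogether \<open>C = 8\<close> works.\<close>

section \<open>Polynomials as finitely supported coefficient functions\<close>

type_synonym mpoly = "nat multiset \<Rightarrow>\<^sub>0 real"

abbreviation coeff :: "mpoly \<Rightarrow> nat multiset \<Rightarrow> real" where "coeff \<equiv> poly_mapping.lookup"

lemma finite_bounded_msets:
  assumes "finite A" shows "finite {M. set_mset M \<subseteq> A \<and> size M \<le> d}"
proof -
  have "{M. set_mset M \<subseteq> A \<and> size M \<le> d} = (\<Union>k\<in>{..d}. multisets_of_size A k)"
    by (auto simp: multisets_of_size_def)
  thus ?thesis using assms by auto
qed

lemma finite_monoms: "finite (monoms n d)"
  unfolding monoms_def by (rule finite_bounded_msets) simp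

lemma monoms_mono: "a \<le> b \<Longrightarrow> monoms n a \<subseteq> monoms n b"
  by (auto simp: monoms_def)

lemma finite_submultisets: "finite {a. a \<subseteq># (g::'a multiset)}"
proof -
  have "{a. a \<subseteq># g} \<subseteq> {M. set_mset M \<subseteq> set_mset g \<and> size M \<le> size g}"
    by (auto simp: size_mset_mono dest: set_mset_mono)
  thus ?thesis using finite_bounded_msets[of "set_mset g" "size g"] finite_subset by blast
qed

lemma Sum_any_when_add_eq:
  "(\<Sum>q. (f q::real) when k = l + q) = (if l \<subseteq># k then f (k - l) else 0)"
proof (cases "l \<subseteq># k")
  case True
  have "(\<Sum>q. f q when k = l + q) = (\<Sum>q. f q when q = k - l)"
    using True by (intro Sum_any.cong) (auto simp: when_def subset_mset.add_diff_inverse)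
  then show ?thesis using True by simp
next
  case False
  then have "\<And>q. (f q when k = l + q) = 0" by (auto simp: when_def)
  then show ?thesis using False by simp
qed

lemma pmul_coeff: "pmul (coeff P) (coeff Q) = coeff (P * Q)"
proof
  fix k
  have "coeff (P * Q) k = Sum_any (\<lambda>l. coeff P l * Sum_any (\<lambda>q. coeff Q q when k = l + q))"
    by (rule lookup_mult)
  also have "\<dots> = Sum_any (\<lambda>l. coeff P l * (if l \<subseteq># k then coeff Q (k - l) else 0))"
    by (simp add: Sum_any_when_add_eq)
  also have "\<dots> = (\<Sum>l\<in>{a. a \<subseteq># k}. coeff P l * (if l \<subseteq># k then coeff Q (k - l) else 0))"
    by (rule Sum_any.expand_superset) (auto simp: finite_submultisets)
  finally show "pmul (coeff P) (coeff Q) k = coeff (P * Q) k"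
    by (simp add: pmul_def)
qed

definition pconst :: "real \<Rightarrow> mpoly" where "pconst c = Poly_Mapping.single {#} c"
definition pvar :: "nat \<Rightarrow> mpoly" where "pvar i = Poly_Mapping.single {#i#} 1"

lemma coeff_pconst_mult: "coeff (pconst c * P) k = c * coeff P k"
  unfolding pconst_def
  by (simp add: mult_map_scale_conv_mult[symmetric, simplified] Poly_Mapping.map.rep_eq when_def)

lemma pconst_mult: "pconst (a * b) = pconst a * pconst b" by (simp add: pconst_def mult_single)
lemma pconst_add: "pconst (a + b) = pconst a + pconst b" by (simp add: pconst_def single_add)
lemma pconst_one: "pconst 1 = 1" by (simp add: pconst_def)
lemma pconst_zero: "pconst 0 = 0" by (simp add: pconst_def)
lemma pconst_numeral: "pconst (numeral k) = numeral k" by (simp add: pconst_def)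
lemma pconst_sum: "pconst (sum f A) = (\<Sum>i\<in>A. pconst (f i))"
  by (induction A rule: infinite_finite_induct) (auto simp: pconst_add pconst_zero)

lemma pvar_mult_pvar: "pvar i * pvar i = Poly_Mapping.single {#i, i#} 1"
  by (simp add: pvar_def mult_single)

definition sq_norm_poly :: "nat \<Rightarrow> mpoly" where "sq_norm_poly n = (\<Sum>i<n. pvar i * pvar i)"
definition lin_poly :: "nat \<Rightarrow> (nat \<Rightarrow> real) \<Rightarrow> mpoly" where
  "lin_poly n w = (\<Sum>i<n. pconst (w i) * pvar i)"

lemma sqnorm_eq_coeff: "sqnorm n = coeff (sq_norm_poly n)"
proof
  fix a
  have "coeff (sq_norm_poly n) a = (\<Sum>i<n. if i \<in> {j. {#j, j#} = a} then 1 else 0)"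
    by (simp add: sq_norm_poly_def pvar_mult_pvar lookup_sum lookup_single when_def)
  also have "\<dots> = real (card ({..<n} \<inter> {j. {#j, j#} = a}))"
    by (simp add: sum.If_cases)
  also have "\<dots> = sqnorm n a"
  proof (cases "\<exists>i<n. a = {#i, i#}")
    case True
    then obtain i where "i < n" "a = {#i, i#}" by blast
    then have "{..<n} \<inter> {j. {#j, j#} = a} = {i}"
      by (auto dest: arg_cong[of _ _ set_mset])
    then show ?thesis using True by (simp add: sqnorm_def)
  next
    case False
    then have "{..<n} \<inter> {j. {#j, j#} = a} = {}" by auto
    then show ?thesis using False by (simp add: sqnorm_def)
  qed
  finally show "sqnorm n a = coeff (sq_norm_poly n) a" by simp
qed

lemma linform_eq_coeff: "linform n w = coeff (lin_poly n w)"
proof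
  fix a
  have "coeff (lin_poly n w) a = (\<Sum>i<n. if i \<in> {j. {#j#} = a} then w i else 0)"
    by (simp add: lin_poly_def pvar_def lookup_sum coeff_pconst_mult lookup_single when_def
        if_distrib cong: if_cong)
  also have "\<dots> = (\<Sum>i\<in>{..<n} \<inter> {j. {#j#} = a}. w i)"
    by (simp add: sum.If_cases)
  also have "\<dots> = linform n w a"
  proof (cases "\<exists>i<n. a = {#i#}")
    case True
    then obtain i where "i < n" "a = {#i#}" by blast
    then have "{..<n} \<inter> {j. {#j#} = a} = {i}" by auto
    then show ?thesis using True \<open>a = {#i#}\<close> by (simp add: linform_def)
  next
    case False
    then have "{..<n} \<inter> {j. {#j#} = a} = {}" by auto
    then show ?thesis using False by (auto simp: linform_def)
  qed
  finally show "linform n w a = coeff (lin_poly n w) a" by simp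
qed

lemma pone_eq_coeff: "pone = coeff 1"
  by (auto simp: pone_def lookup_one when_def)

lemma sphere_poly_eq_coeff: "sphere_poly n = coeff (sq_norm_poly n - 1)"
  by (auto simp: sphere_poly_def sqnorm_eq_coeff pone_eq_coeff lookup_minus)

text \<open>Lagrange's identity: a sum-of-squares certificate of \<open>\<langle>w, x\<rangle>\<^sup>2 \<le> \<parallel>w\<parallel>\<^sup>2 \<parallel>x\<parallel>\<^sup>2\<close>.\<close>
lemma lagrange_identity_poly:
  fixes w :: "nat \<Rightarrow> real" and n :: nat
  defines "W \<equiv> (\<Sum>i<n. (w i)\<^sup>2)"
  shows "(\<Sum>i<n. (pconst W * pvar i - pconst (w i) * lin_poly n w)\<^sup>2)
    = pconst (W\<^sup>2) * sq_norm_poly n - pconst W * (lin_poly n w)\<^sup>2"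
proof -
  let ?P = "lin_poly n w"
  have "(\<Sum>i<n. (pconst W * pvar i - pconst (w i) * ?P)\<^sup>2) =
     (\<Sum>i<n. pconst (W\<^sup>2) * (pvar i * pvar i) - pconst 2 * pconst W * ?P * (pconst (w i) * pvar i)
       + pconst ((w i)\<^sup>2) * ?P\<^sup>2)"
    by (intro sum.cong refl) (simp add: power2_eq_square pconst_mult algebra_simps pconst_numeral)
  also have "\<dots> = pconst (W\<^sup>2) * sq_norm_poly n - pconst 2 * pconst W * ?P * ?P + pconst W * ?P\<^sup>2"
    by (simp add: sum.distrib sum_subtractf sum_distrib_left sum_distrib_right
        sq_norm_poly_def lin_poly_def W_def pconst_sum)
  also have "\<dots> = pconst (W\<^sup>2) * sq_norm_poly n - pconst W * ?P\<^sup>2"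
    by (simp add: power2_eq_square algebra_simps pconst_numeral)
  finally show ?thesis .
qed

definition degree_le :: "nat \<Rightarrow> nat \<Rightarrow> mpoly \<Rightarrow> bool" where
  "degree_le n d P \<longleftrightarrow> Poly_Mapping.keys P \<subseteq> monoms n d"

lemma degree_le_iff_poly_in: "degree_le n d P \<longleftrightarrow> poly_in n d (coeff P)"
  by (auto simp: degree_le_def poly_in_def in_keys_iff)

lemma poly_in_obtain_mpoly:
  assumes "poly_in n d q"
  obtains P where "q = coeff P" "degree_le n d P"
proof
  have "finite {x. q x \<noteq> 0}"
    using assms finite_monoms[of n d] unfolding poly_in_def by (auto intro: finite_subset)
  then show "q = coeff (Abs_poly_mapping q)" by simp
  with assms show "degree_le n d (Abs_poly_mapping q)" by (simp add: degree_le_iff_poly_in)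
qed

lemma degree_le_mono: "degree_le n a P \<Longrightarrow> a \<le> b \<Longrightarrow> degree_le n b P"
  unfolding degree_le_def by (metis monoms_mono order_trans)

lemma degree_le_add: "degree_le n d P \<Longrightarrow> degree_le n d Q \<Longrightarrow> degree_le n d (P + Q)"
  unfolding degree_le_def using keys_add[of P Q] by blast

lemma degree_le_diff: "degree_le n d P \<Longrightarrow> degree_le n d Q \<Longrightarrow> degree_le n d (P - Q)"
  unfolding degree_le_def by (auto simp: in_keys_iff lookup_minus) (metis in_keys_iff subsetD)

lemma degree_le_sum: "(\<And>i. i \<in> I \<Longrightarrow> degree_le n d (f i)) \<Longrightarrow> degree_le n d (sum f I)"
  by (induction I rule: infinite_finite_induct) (auto intro: degree_le_add simp: degree_le_def[of n d 0])

lemma degree_le_mult: "degree_le n a P \<Longrightarrow> degree_le n b Q \<Longrightarrow> degree_le n (a + b) (P * Q)"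
  unfolding degree_le_def using keys_mult[of P Q] by (fastforce simp: monoms_def)

lemma degree_le_pconst: "degree_le n d (pconst c)"
  by (simp add: degree_le_def pconst_def monoms_def)

lemma degree_le_one: "degree_le n d 1"
  using degree_le_pconst[of n d 1] by (simp add: pconst_one)

lemma degree_le_pvar: "i < n \<Longrightarrow> degree_le n 1 (pvar i)"
  by (simp add: degree_le_def pvar_def monoms_def)

lemma degree_le_pconst_mult: "degree_le n d P \<Longrightarrow> degree_le n d (pconst c * P)"
  using degree_le_mult[OF degree_le_pconst[of n 0 c]] by simp

lemma degree_le_power: "degree_le n d P \<Longrightarrow> degree_le n (k * d) (P ^ k)"
  by (induction k) (auto simp: degree_le_one intro: degree_le_mult)

lemma degree_le_sq_norm_poly: "degree_le n 2 (sq_norm_poly n)"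
  unfolding sq_norm_poly_def
  by (rule degree_le_sum) (metis degree_le_pvar degree_le_mult lessThan_iff one_add_one)

lemma degree_le_lin_poly: "degree_le n 1 (lin_poly n w)"
  unfolding lin_poly_def by (rule degree_le_sum) (metis degree_le_pconst_mult degree_le_pvar lessThan_iff)

lemma degree_le_pvar_minus_lin: "i < n \<Longrightarrow> degree_le n 1 (pconst a * pvar i - pconst b * lin_poly n w)"
  by (intro degree_le_diff degree_le_pconst_mult degree_le_pvar degree_le_lin_poly)

definition pexp4 :: "nat \<Rightarrow> (nat multiset \<Rightarrow> real) \<Rightarrow> mpoly \<Rightarrow> real" where
  "pexp4 n L P = pE n 4 L (coeff P)"

lemma pexp4_add: "pexp4 n L (P + Q) = pexp4 n L P + pexp4 n L Q"
  by (simp add: pexp4_def pE_def lookup_add algebra_simps sum.distrib)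

lemma pexp4_diff: "pexp4 n L (P - Q) = pexp4 n L P - pexp4 n L Q"
  by (simp add: pexp4_def pE_def lookup_minus algebra_simps sum_subtractf)

lemma pexp4_sum: "pexp4 n L (sum f I) = (\<Sum>i\<in>I. pexp4 n L (f i))"
  by (induction I rule: infinite_finite_induct) (auto simp: pexp4_add pexp4_def[of n L 0] pE_def)

lemma pexp4_pconst_mult: "pexp4 n L (pconst c * P) = c * pexp4 n L P"
  by (simp add: pexp4_def pE_def coeff_pconst_mult sum_distrib_left mult.assoc)

lemma pexp4_single:
  "pexp4 n L (Poly_Mapping.single a c) = (if a \<in> monoms n 4 then c * L a else 0)"
proof -
  have "\<And>x. coeff (Poly_Mapping.single a c) x * L x = (if x = a then c * L a else 0)"
    by (auto simp: lookup_single when_def)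
  then have "pexp4 n L (Poly_Mapping.single a c) = (\<Sum>x\<in>monoms n 4. if x = a then c * L a else 0)"
    unfolding pexp4_def pE_def by (intro sum.cong) auto
  then show ?thesis by (simp add: finite_monoms)
qed

lemma pexp4_one: "pexp4 n L 1 = L {#}"
  using pexp4_single[of n L "{#}" 1] by (simp add: monoms_def)

lemma pexp4_pconst: "pexp4 n L (pconst c) = c * L {#}"
  using pexp4_pconst_mult[of n L c 1] by (simp add: pexp4_one)

lemma pexp4_pvar: "i < n \<Longrightarrow> pexp4 n L (pvar i) = L {#i#}"
  by (simp add: pvar_def pexp4_single monoms_def)

lemma pexp4_lin_poly: "pexp4 n L (lin_poly n w) = (\<Sum>i<n. w i * L {#i#})"
  by (simp add: lin_poly_def pexp4_sum pexp4_pconst_mult pexp4_pvar)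

lemma mpoly_eq_sum_monoms:
  "degree_le n d P \<Longrightarrow> P = (\<Sum>a\<in>monoms n d. Poly_Mapping.single a (coeff P a))"
  by (rule poly_mapping_eqI)
     (auto simp: lookup_sum lookup_single when_def finite_monoms degree_le_def in_keys_iff)

lemma pexp4_degree_le:
  assumes "degree_le n d P" "d \<le> 4"
  shows "pexp4 n L P = (\<Sum>a\<in>monoms n d. coeff P a * L a)"
proof -
  have "pexp4 n L P = (\<Sum>a\<in>monoms n d. pexp4 n L (Poly_Mapping.single a (coeff P a)))"
    by (subst mpoly_eq_sum_monoms[OF assms(1)]) (simp add: pexp4_sum)
  also have "\<dots> = (\<Sum>a\<in>monoms n d. coeff P a * L a)"
    using monoms_mono[OF assms(2)] by (intro sum.cong) (auto simp: pexp4_single)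
  finally show ?thesis .
qed

lemma pexp4_mult:
  assumes "degree_le n a P" "degree_le n b Q" "a + b \<le> 4"
  shows "pexp4 n L (P * Q)
    = (\<Sum>x\<in>monoms n a. \<Sum>y\<in>monoms n b. coeff P x * coeff Q y * L (x + y))"
proof -
  have "P * Q = (\<Sum>x\<in>monoms n a. Poly_Mapping.single x (coeff P x))
      * (\<Sum>y\<in>monoms n b. Poly_Mapping.single y (coeff Q y))"
    using mpoly_eq_sum_monoms[OF assms(1)] mpoly_eq_sum_monoms[OF assms(2)] by simp
  also have "\<dots> = (\<Sum>x\<in>monoms n a. \<Sum>y\<in>monoms n b.
      Poly_Mapping.single (x + y) (coeff P x * coeff Q y))"
    by (subst sum_product) (simp add: mult_single)
  finally have "pexp4 n L (P * Q) = (\<Sum>x\<in>monoms n a. \<Sum>y\<in>monoms n b.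
      pexp4 n L (Poly_Mapping.single (x + y) (coeff P x * coeff Q y)))"
    by (simp add: pexp4_sum)
  also have "\<dots> = (\<Sum>x\<in>monoms n a. \<Sum>y\<in>monoms n b. coeff P x * coeff Q y * L (x + y))"
  proof (intro sum.cong refl)
    fix x y assume "x \<in> monoms n a" "y \<in> monoms n b"
    then have "x + y \<in> monoms n 4" using assms(3) by (auto simp: monoms_def)
    then show "pexp4 n L (Poly_Mapping.single (x + y) (coeff P x * coeff Q y))
        = coeff P x * coeff Q y * L (x + y)"
      by (simp add: pexp4_single)
  qed
  finally show ?thesis .
qed

section \<open>The point mass at a unit vector\<close>

definition point_mass :: "(nat \<Rightarrow> real) \<Rightarrow> nat multiset \<Rightarrow> real" where
  "point_mass v a = prod_mset (image_mset v a)"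

lemma pexp4_point_mass_mult:
  assumes "degree_le n a P" "degree_le n b Q" "a + b \<le> 4"
  shows "pexp4 n (point_mass v) (P * Q) = pexp4 n (point_mass v) P * pexp4 n (point_mass v) Q"
proof -
  have "pexp4 n (point_mass v) (P * Q) = (\<Sum>x\<in>monoms n a. \<Sum>y\<in>monoms n b.
      (coeff P x * point_mass v x) * (coeff Q y * point_mass v y))"
    by (simp add: pexp4_mult[OF assms] point_mass_def mult_ac)
  also have "\<dots> = pexp4 n (point_mass v) P * pexp4 n (point_mass v) Q"
    using assms by (simp add: pexp4_degree_le sum_product)
  finally show ?thesis .
qed

context
  fixes n :: nat and v :: "nat \<Rightarrow> real"
  assumes unit: "(\<Sum>i<n. (v i)\<^sup>2) = 1"
begin

lemma pexp4_point_mass_sq_norm: "pexp4 n (point_mass v) (sq_norm_poly n) = 1"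
proof -
  have "pexp4 n (point_mass v) (sq_norm_poly n) = (\<Sum>i<n. pexp4 n (point_mass v) (pvar i * pvar i))"
    by (simp add: sq_norm_poly_def pexp4_sum)
  also have "\<dots> = (\<Sum>i<n. (v i)\<^sup>2)"
    by (intro sum.cong refl)
       (simp add: pexp4_point_mass_mult[OF degree_le_pvar degree_le_pvar] pexp4_pvar
         point_mass_def power2_eq_square)
  finally show ?thesis using unit by simp
qed

lemma pexp4_point_mass_lin_poly: "pexp4 n (point_mass v) (lin_poly n v) = 1"
  using unit by (simp add: pexp4_lin_poly point_mass_def power2_eq_square)

lemma pexp4_point_mass_sq_norm_sq:
  "pexp4 n (point_mass v) (sq_norm_poly n * sq_norm_poly n) = 1"
  by (simp add: pexp4_point_mass_mult[OF degree_le_sq_norm_poly degree_le_sq_norm_poly]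
      pexp4_point_mass_sq_norm)

lemma pexp4_point_mass_lin_cube: "pexp4 n (point_mass v) ((lin_poly n v)^3) = 1"
proof -
  have "degree_le n 2 (lin_poly n v * lin_poly n v)"
    using degree_le_mult[OF degree_le_lin_poly degree_le_lin_poly, of n v v] by (simp add: numeral_2_eq_2)
  then show ?thesis
    by (simp add: power3_eq_cube pexp4_point_mass_mult[OF _ degree_le_lin_poly]
        pexp4_point_mass_mult[OF degree_le_lin_poly degree_le_lin_poly] pexp4_point_mass_lin_poly)
qed

lemma point_mass_pseudo_exp: "pseudo_exp n 4 (point_mass v)"
  unfolding pseudo_exp_def
proof (intro conjI allI impI)
  show "pE n 4 (point_mass v) pone = 1"
    by (simp add: pone_eq_coeff flip: pexp4_def) (simp add: pexp4_one point_mass_def)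
  fix q assume "poly_in n (4 div 2) q"
  then obtain Q where Q: "q = coeff Q" "degree_le n 2 Q"
    by (auto elim: poly_in_obtain_mpoly)
  have "pE n 4 (point_mass v) (pmul q q) = (pexp4 n (point_mass v) Q)\<^sup>2"
    by (simp add: Q pmul_coeff pexp4_point_mass_mult[OF Q(2) Q(2)] power2_eq_square
        flip: pexp4_def)
  then show "0 \<le> pE n 4 (point_mass v) (pmul q q)" by simp
qed

lemma point_mass_satisfies_sphere: "satisfies n 4 (point_mass v) 2 (sphere_poly n)"
  unfolding satisfies_def
proof (intro allI impI)
  fix q assume "poly_in n (4 - 2) q"
  then obtain Q where Q: "q = coeff Q" "degree_le n 2 Q"
    by (auto elim: poly_in_obtain_mpoly)
  have "degree_le n 2 (sq_norm_poly n - 1)"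
    by (intro degree_le_diff degree_le_sq_norm_poly degree_le_one)
  then show "pE n 4 (point_mass v) (pmul (sphere_poly n) q) = 0"
    by (simp add: Q pmul_coeff sphere_poly_eq_coeff pexp4_point_mass_mult[OF _ Q(2)] pexp4_diff
        pexp4_point_mass_sq_norm pexp4_one point_mass_def flip: pexp4_def)
qed

end

section \<open>Pseudo-expectations on the sphere\<close>

context
  fixes n :: nat and L :: "nat multiset \<Rightarrow> real"
  assumes pseudo: "pseudo_exp n 4 L" and sphere: "satisfies n 4 L 2 (sphere_poly n)"
begin

lemma pexp4_square_nonneg: "degree_le n 2 Q \<Longrightarrow> 0 \<le> pexp4 n L (Q\<^sup>2)"
  using pseudo unfolding pseudo_exp_def
  by (auto simp: degree_le_iff_poly_in pmul_coeff pexp4_def power2_eq_square)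

lemma pexp4_one_eq: "pexp4 n L 1 = 1"
  using pseudo by (simp add: pseudo_exp_def pone_eq_coeff pexp4_def)

lemma pexp4_sq_norm_mult:
  assumes "degree_le n 2 Q" shows "pexp4 n L (sq_norm_poly n * Q) = pexp4 n L Q"
proof -
  have "pE n 4 L (pmul (sphere_poly n) (coeff Q)) = 0"
    using sphere assms by (simp add: satisfies_def degree_le_iff_poly_in)
  then have "pexp4 n L ((sq_norm_poly n - 1) * Q) = 0"
    by (simp add: sphere_poly_eq_coeff pmul_coeff pexp4_def)
  then show ?thesis by (simp add: left_diff_distrib pexp4_diff)
qed

lemma pexp4_sq_norm: "pexp4 n L (sq_norm_poly n) = 1"
  using pexp4_sq_norm_mult[OF degree_le_one] by (simp add: pexp4_one_eq)

lemma pexp4_sq_norm_sq: "pexp4 n L (sq_norm_poly n * sq_norm_poly n) = 1"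
  by (simp add: pexp4_sq_norm_mult[OF degree_le_sq_norm_poly] pexp4_sq_norm)

lemma pexp4_lin_poly_sq_le: "pexp4 n L ((lin_poly n w)\<^sup>2) \<le> (\<Sum>i<n. (w i)\<^sup>2)"
proof (cases "(\<Sum>i<n. (w i)\<^sup>2) = 0")
  case True
  then have "\<forall>i<n. w i = 0" by (simp add: sum_nonneg_eq_0_iff)
  then have "lin_poly n w = 0" by (simp add: lin_poly_def pconst_zero)
  then show ?thesis using True by (simp add: pexp4_def pE_def)
next
  case False
  let ?W = "\<Sum>i<n. (w i)\<^sup>2"
  have "0 \<le> (\<Sum>i<n. pexp4 n L ((pconst ?W * pvar i - pconst (w i) * lin_poly n w)\<^sup>2))"
    by (intro sum_nonneg pexp4_square_nonneg degree_le_mono[OF degree_le_pvar_minus_lin]) auto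
  also have "\<dots> = pexp4 n L (\<Sum>i<n. (pconst ?W * pvar i - pconst (w i) * lin_poly n w)\<^sup>2)"
    by (simp add: pexp4_sum)
  also have "\<dots> = ?W * (?W - pexp4 n L ((lin_poly n w)\<^sup>2))"
    unfolding lagrange_identity_poly
    by (simp add: pexp4_diff pexp4_pconst_mult pexp4_sq_norm power2_eq_square right_diff_distrib)
  finally have "0 \<le> ?W * (?W - pexp4 n L ((lin_poly n w)\<^sup>2))" .
  moreover have "0 < ?W" using False sum_nonneg[of "{..<n}" "\<lambda>i. (w i)\<^sup>2"] by simp
  ultimately show ?thesis by (simp add: zero_le_mult_iff)
qed

lemma pexp4_lin_poly_ge_cube:
  assumes unit: "(\<Sum>i<n. (v i)\<^sup>2) = 1"
  shows "2 * pexp4 n L ((lin_poly n v)^3) - 1 \<le> pexp4 n L (lin_poly n v)"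
proof -
  let ?t = "lin_poly n v"
  let ?R = "1 + ?t"
  have deg_R: "degree_le n 1 ?R" by (intro degree_le_add degree_le_lin_poly degree_le_one)
  have deg_R2: "degree_le n 2 (?R\<^sup>2)" using degree_le_power[OF deg_R, of 2] by simp
  text \<open>\<open>(1 + t)\<^sup>2 (\<parallel>x\<parallel>\<^sup>2 - t\<^sup>2)\<close> is a sum of squares of degree-2 polynomials.\<close>
  have "0 \<le> (\<Sum>i<n. pexp4 n L ((?R * (pconst 1 * pvar i - pconst (v i) * ?t))\<^sup>2))"
    by (intro sum_nonneg pexp4_square_nonneg)
       (metis deg_R degree_le_pvar_minus_lin degree_le_mult lessThan_iff one_add_one)
  also have "\<dots> = pexp4 n L (?R\<^sup>2 * (sq_norm_poly n - ?t\<^sup>2))"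
    using lagrange_identity_poly[of v n] unit
    by (simp add: pconst_one power_mult_distrib flip: pexp4_sum sum_distrib_left)
  also have "\<dots> = pexp4 n L (?R\<^sup>2 - ?R\<^sup>2 * ?t\<^sup>2)"
    by (simp add: right_diff_distrib pexp4_diff mult.commute[of "?R\<^sup>2" "sq_norm_poly n"]
        pexp4_sq_norm_mult[OF deg_R2])
  also have "?R\<^sup>2 - ?R\<^sup>2 * ?t\<^sup>2 = 1 + pconst 2 * ?t - pconst 2 * ?t^3 - ?t^4"
    by (simp add: pconst_numeral power2_eq_square power3_eq_cube power4_eq_xxxx algebra_simps)
  finally have sos1: "0 \<le> 1 + 2 * pexp4 n L ?t - 2 * pexp4 n L (?t^3) - pexp4 n L (?t^4)"
    by (simp add: pexp4_add pexp4_diff pexp4_pconst_mult pexp4_one_eq)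
  have "degree_le n 2 (?t\<^sup>2 - ?t)"
    by (intro degree_le_diff degree_le_mono[OF degree_le_lin_poly]
        degree_le_mono[OF degree_le_power[OF degree_le_lin_poly]]) auto
  then have "0 \<le> pexp4 n L ((?t\<^sup>2 - ?t)\<^sup>2)" by (rule pexp4_square_nonneg)
  also have "(?t\<^sup>2 - ?t)\<^sup>2 = ?t^4 - pconst 2 * ?t^3 + ?t^2"
    by (simp add: pconst_numeral power2_eq_square power3_eq_cube power4_eq_xxxx algebra_simps)
  finally have sos2: "0 \<le> pexp4 n L (?t^4) - 2 * pexp4 n L (?t^3) + pexp4 n L (?t^2)"
    by (simp add: pexp4_add pexp4_diff pexp4_pconst_mult)
  have "pexp4 n L (?t^2) \<le> 1" using pexp4_lin_poly_sq_le[of v] unit by simp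
  with sos1 sos2 show ?thesis by linarith
qed

lemma mean_sq_norm_le_one: "(\<Sum>i<n. (L {#i#})\<^sup>2) \<le> 1"
proof -
  let ?u = "\<lambda>i. L {#i#}"
  let ?W = "\<Sum>i<n. (?u i)\<^sup>2"
  let ?P = "lin_poly n ?u"
  have "degree_le n 2 (?P - pconst ?W)"
    by (intro degree_le_diff degree_le_mono[OF degree_le_lin_poly] degree_le_pconst) auto
  then have "0 \<le> pexp4 n L ((?P - pconst ?W)\<^sup>2)" by (rule pexp4_square_nonneg)
  also have "(?P - pconst ?W)\<^sup>2 = ?P\<^sup>2 - pconst 2 * (pconst ?W * ?P) + pconst (?W\<^sup>2)"
    by (simp add: pconst_numeral power2_eq_square pconst_mult algebra_simps)
  finally have "?W\<^sup>2 \<le> pexp4 n L (?P\<^sup>2)"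
    using pexp4_one_eq
    by (simp add: pexp4_add pexp4_diff pexp4_pconst_mult pexp4_pconst pexp4_one pexp4_lin_poly
        power2_eq_square)
  also have "\<dots> \<le> ?W" by (rule pexp4_lin_poly_sq_le)
  finally have "?W * ?W \<le> ?W" by (simp add: power2_eq_square)
  then show ?thesis unfolding mult_le_cancel_left2 by linarith
qed

end

lemma normalized_inner_ge:
  fixes u v :: "nat \<Rightarrow> real"
  assumes "(\<Sum>i<n. (v i)\<^sup>2) = 1" "(\<Sum>i<n. (u i)\<^sup>2) \<le> 1" "0 \<le> c"
    and "1 - c \<le> (\<Sum>i<n. u i * v i)"
  shows "1 - 2 * c \<le> (\<Sum>i<n. (u i / sqrt (\<Sum>i<n. (u i)\<^sup>2)) * v i)"
proof -
  define m where "m = sqrt (\<Sum>i<n. (u i)\<^sup>2)"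
  define s where "s = (\<Sum>i<n. u i * v i)"
  have m: "0 \<le> m" "m \<le> 1" using assms(2) by (auto simp: m_def sum_nonneg)
  have "(\<Sum>i<n. (u i / m) * v i) = s / m"
    by (simp add: s_def sum_divide_distrib)
  moreover have "\<bar>s\<bar> \<le> m"
  proof -
    have "\<bar>s\<bar> \<le> (\<Sum>i<n. \<bar>u i\<bar> * \<bar>v i\<bar>)"
      unfolding s_def by (rule order_trans[OF sum_abs]) (simp add: abs_mult)
    also have "\<dots> \<le> L2_set u {..<n} * L2_set v {..<n}" by (rule L2_set_mult_ineq)
    finally show ?thesis using assms(1) by (simp add: L2_set_def m_def)
  qed
  moreover have "1 - 2 * c \<le> s / m"
  proof (cases "c < 1")
    case True
    then have "0 < s" using assms(4) by (simp add: s_def)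
    with \<open>\<bar>s\<bar> \<le> m\<close> m have "s \<le> s / m" by (simp add: le_divide_eq mult_left_le)
    then show ?thesis using assms(3,4) by (simp add: s_def)
  next
    case False
    have "-1 \<le> s / m"
      using \<open>\<bar>s\<bar> \<le> m\<close> m by (cases "m = 0") (auto simp: le_divide_eq)
    then show ?thesis using False by simp
  qed
  ultimately show ?thesis by (simp add: m_def)
qed

lemma optimal_pseudo_exp_correlation:
  assumes unit: "(\<Sum>i<n. (v0 i)\<^sup>2) = 1" and "\<tau> > 0" and "\<epsilon> \<ge> 0"
    and A_bound: "\<And>L'. pseudo_exp n 4 L' \<Longrightarrow>
        \<bar>pE n 4 L' A\<bar> \<le> \<epsilon> * \<tau> * (pE n 4 L' (pmul (sqnorm n) (sqnorm n))) powr (3/4)"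
    and pseudo: "pseudo_exp n 4 L" and sphere: "satisfies n 4 L 2 (sphere_poly n)"
    and optimal: "pE n 4 (point_mass v0) T \<le> pE n 4 L T"
    and T_def: "T = (\<lambda>\<alpha>. \<tau> * pmul (pmul (linform n v0) (linform n v0)) (linform n v0) \<alpha> + A \<alpha>)"
  shows "1 - 8 * \<epsilon> \<le> (\<Sum>i<n. (L {#i#} / sqrt (\<Sum>i<n. (L {#i#})\<^sup>2)) * v0 i)"
proof -
  let ?t = "lin_poly n v0"
  have pE_T: "pE n 4 L' T = \<tau> * pexp4 n L' (?t^3) + pE n 4 L' A" for L'
    by (simp add: T_def pE_def linform_eq_coeff pmul_coeff power3_eq_cube pexp4_def
        algebra_simps sum.distrib sum_distrib_left)
  have A_bound_sphere: "\<bar>pE n 4 L' A\<bar> \<le> \<epsilon> * \<tau>"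
    if "pexp4 n L' (sq_norm_poly n * sq_norm_poly n) = 1" "pseudo_exp n 4 L'" for L'
    using A_bound[OF that(2)] that(1) by (simp add: sqnorm_eq_coeff pmul_coeff pexp4_def)
  have "\<tau> - \<epsilon> * \<tau> \<le> \<tau> * pexp4 n L (?t^3) + \<epsilon> * \<tau>"
    using optimal A_bound_sphere[OF pexp4_point_mass_sq_norm_sq[OF unit] point_mass_pseudo_exp[OF unit]]
      A_bound_sphere[OF pexp4_sq_norm_sq[OF pseudo sphere] pseudo]
    by (simp add: pE_T pexp4_point_mass_lin_cube[OF unit] abs_le_iff)
  then have "\<tau> * (1 - 2 * \<epsilon>) \<le> \<tau> * pexp4 n L (?t^3)" by (simp add: algebra_simps)
  with \<open>\<tau> > 0\<close> have "1 - 2 * \<epsilon> \<le> pexp4 n L (?t^3)" by simp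
  then have "1 - 4 * \<epsilon> \<le> (\<Sum>i<n. L {#i#} * v0 i)"
    using pexp4_lin_poly_ge_cube[OF pseudo sphere unit] unfolding pexp4_lin_poly by (simp add: mult.commute)
  then show ?thesis
    using normalized_inner_ge[OF unit mean_sq_norm_le_one[OF pseudo sphere], of "4 * \<epsilon>"] \<open>\<epsilon> \<ge> 0\<close>
    by simp
qed

theorem mainTheorem3:
  "\<exists>C::real. \<forall>(n::nat) (v0::nat \<Rightarrow> real) (\<tau>::real) (\<epsilon>::real) A L.
     (\<Sum>i<n. (v0 i)\<^sup>2) = 1 \<longrightarrow> \<tau> > 0 \<longrightarrow> \<epsilon> \<ge> 0 \<longrightarrow>
     homogeneous_cubic n A \<longrightarrow>
     (\<forall>L'. pseudo_exp n 4 L' \<longrightarrow>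
        \<bar>pE n 4 L' A\<bar> \<le> \<epsilon> * \<tau> * (pE n 4 L' (pmul (sqnorm n) (sqnorm n))) powr (3/4)) \<longrightarrow>
     (let T = (\<lambda>\<alpha>. \<tau> * pmul (pmul (linform n v0) (linform n v0)) (linform n v0) \<alpha> + A \<alpha>)
      in pseudo_exp n 4 L \<and> satisfies n 4 L 2 (sphere_poly n) \<and>
         (\<forall>L'. pseudo_exp n 4 L' \<and> satisfies n 4 L' 2 (sphere_poly n) \<longrightarrow> pE n 4 L' T \<le> pE n 4 L T)
      \<longrightarrow> (let m = sqrt (\<Sum>i<n. (L {#i#})\<^sup>2)
          in (\<Sum>i<n. (L {#i#} / m) * v0 i) \<ge> 1 - C * \<epsilon>))"
proof (rule exI[of _ 8], unfold Let_def, intro allI impI, elim conjE)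
  fix n v0 \<tau> \<epsilon> A L
  let ?T = "\<lambda>\<alpha>. \<tau> * pmul (pmul (linform n v0) (linform n v0)) (linform n v0) \<alpha> + A \<alpha>"
  assume unit: "(\<Sum>i<n. (v0 i)\<^sup>2) = 1" and "\<tau> > 0" "\<epsilon> \<ge> 0"
    and "\<forall>L'. pseudo_exp n 4 L' \<longrightarrow>
        \<bar>pE n 4 L' A\<bar> \<le> \<epsilon> * \<tau> * (pE n 4 L' (pmul (sqnorm n) (sqnorm n))) powr (3/4)"
    and "pseudo_exp n 4 L" "satisfies n 4 L 2 (sphere_poly n)"
    and "\<forall>L'. pseudo_exp n 4 L' \<and> satisfies n 4 L' 2 (sphere_poly n) \<longrightarrow> pE n 4 L' ?T \<le> pE n 4 L ?T"
  then show "1 - 8 * \<epsilon> \<le> (\<Sum>i<n. L {#i#} / sqrt (\<Sum>i<n. (L {#i#})\<^sup>2) * v0 i)"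
    using point_mass_pseudo_exp[OF unit] point_mass_satisfies_sphere[OF unit]
    by (intro optimal_pseudo_exp_correlation[where T = ?T]) auto
qed

end
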